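(* Let $p$ be a set partition with $N(p)\ge 3$ distinct letters and length $|p|\le 2N(p)$. If $\phi_{aba}^{N(p)-1}(p)$ is not sorted, then $p$ is equivalent to the set partition $(a_1a_2\cdots a_{N(p)})^2 = a_1a_2\cdots a_{N(p)}a_1a_2\cdots a_{N(p)}$, where $a_1,\dots,a_{N(p)}$ are distinct letters.
   Context: A set partition is a finite word $p=p_1p_2\cdots p_n$ over an alphabet $A$ (letters may repeat). Its length is $|p|=n$ and $N(p)$ denotes the number of distinct letters occurring in $p$. A set partition is sorted if, for every letter, all occurrences of that letter appear consecutively. Two set partitions $p=p_1\cdots p_n$ and $q=q_1\cdots q_n$ are equivalent if there is a bijection $f:A\to A$ with $q=f(p_1)f(p_2)\cdots f(p_n)$. A word contains the pattern $aba$ if it has a (not necessarily contiguous) subsequence $xyz$ with $x=z\neq y$; otherwise it avoids $aba$. The map $\phi_{aba}$ (Xia's deterministic stack-sorting map for set partitions) is defined as follows. Start with the input $p$, an empty stack, and an empty output. Repeat: if the input is nonempty and pushing its leftmost letter onto the top of the stack would leave the stack contents (read from top to bottom) avoiding the pattern $aba$, then remove that letter from the input and push it onto the stack; otherwise pop the top letter of the stack and append it to the right end of the output. Stop when both input and stack are empty; $\phi_{aba}(p)$ is the output word. For example, $\phi_{aba}(abcac)=cbcaa$. $\phi_{aba}^k$ denotes the $k$-fold iterate. *)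

theory Defs
  imports Main
begin

text \<open>Set partitions are words (lists) over an alphabet of type 'a.\<close>

definition num_letters :: "'a list \<Rightarrow> nat" where
  "num_letters p = card (set p)"

definition contains_aba :: "'a list \<Rightarrow> bool" where
  "contains_aba w \<longleftrightarrow> (\<exists>i j k. i < j \<and> j < k \<and> k < length w \<and>
      w ! i = w ! k \<and> w ! i \<noteq> w ! j)"

definition avoids_aba :: "'a list \<Rightarrow> bool" where
  "avoids_aba w \<longleftrightarrow> \<not> contains_aba w"

definition sorted_partition :: "'a list \<Rightarrow> bool" where
  "sorted_partition w \<longleftrightarrow> (\<forall>i j k. i < j \<and> j < k \<and> k < length w \<and> w ! i = w ! k \<longrightarrow> w ! j = w ! i)"

definition equivalent :: "'a list \<Rightarrow> 'a list \<Rightarrow> bool" where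
  "equivalent p q \<longleftrightarrow> (\<exists>f. bij f \<and> q = map f p)"

text \<open>The stack is a list whose head is the top.\<close>
function stack_run :: "'a list \<Rightarrow> 'a list \<Rightarrow> 'a list" where
  "stack_run inp st =
     (case inp of
        c # rest \<Rightarrow>
          if avoids_aba (c # st) then stack_run rest (c # st)
          else (case st of [] \<Rightarrow> [] | t # st' \<Rightarrow> t # stack_run inp st')
      | [] \<Rightarrow> (case st of [] \<Rightarrow> [] | t # st' \<Rightarrow> t # stack_run [] st'))"
  by pat_completeness auto
termination
  by (relation "measure (\<lambda>(inp, st). 2 * length inp + length st)") auto

definition phi_aba :: "'a list \<Rightarrow> 'a list" where
  "phi_aba p = stack_run p []"

end

theory Submission
  imports Defs
begin

text \<open>Let \<open>runs w\<close> be the number of maximal blocks of equal adjacent letters of \<open>w\<close>;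
  then \<open>N(w) \<le> runs w \<le> |w|\<close>, with equality on the left exactly for sorted words. Running
  the stack machine on \<open>w\<close> can only glue runs together, and it does so at least once when
  \<open>w\<close> is unsorted: \<open>runs (\<phi> w) + m(w) \<le> runs w\<close> where \<open>m(w) \<ge> 1\<close> counts the gluings.
  So if \<open>\<phi>\<^sup>N\<^sup>-\<^sup>1(p)\<close> is unsorted then \<open>runs p \<ge> 2N \<ge> |p|\<close>: the word \<open>p\<close> has length \<open>2N\<close>,
  no two equal adjacent letters, and the first pass glues exactly once. That single gluing
  splits \<open>p = \<tau>\<rho>\<close> into two permutations of the alphabet. For words of the shape
  \<open>S\<^sub>1 \<tau> S\<^sub>2 \<rho> S\<^sub>3\<close> (sorted, pairwise disjoint \<open>S\<^sub>i\<close>) the same counting again allows only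
  one gluing per pass; it forces \<open>\<tau>\<close> and \<open>\<rho>\<close> to start with the same letter \<open>t\<close>, and the
  pass yields a word of the same shape with \<open>\<tau>, \<rho>\<close> reversed and stripped of \<open>t\<close>.
  Induction on \<open>|\<tau>|\<close> gives \<open>\<rho> = \<tau>\<close>.\<close>

lemma sorted_partition_Nil [simp]: "sorted_partition []"
  by (simp add: sorted_partition_def)

lemma sorted_partitionD:
  "sorted_partition w \<Longrightarrow> i < j \<Longrightarrow> j < k \<Longrightarrow> k < length w \<Longrightarrow> w ! i = w ! k \<Longrightarrow> w ! j = w ! i"
  unfolding sorted_partition_def by blast

lemma sorted_partition_Cons [simp]:
  "sorted_partition (x # xs) \<longleftrightarrow> sorted_partition xs \<and> (x \<in> set xs \<longrightarrow> x = hd xs)"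
proof
  assume sorted: "sorted_partition (x # xs)"
  have "sorted_partition xs"
    unfolding sorted_partition_def
  proof (intro allI impI)
    fix i j k assume "i < j \<and> j < k \<and> k < length xs \<and> xs ! i = xs ! k"
    then show "xs ! j = xs ! i"
      using sorted_partitionD[OF sorted, of "Suc i" "Suc j" "Suc k"] by simp
  qed
  moreover have "x = hd xs" if "x \<in> set xs"
  proof -
    obtain k where k: "k < length xs" "xs ! k = x" using \<open>x \<in> set xs\<close> by (meson in_set_conv_nth)
    then have "xs ! 0 = x"
      using sorted_partitionD[OF sorted, of 0 1 "Suc k"] by (cases k) auto
    then show ?thesis using k by (cases xs) auto
  qed
  ultimately show "sorted_partition xs \<and> (x \<in> set xs \<longrightarrow> x = hd xs)" by blast
next
  assume "sorted_partition xs \<and> (x \<in> set xs \<longrightarrow> x = hd xs)"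
  then have sorted: "sorted_partition xs" and head: "x \<in> set xs \<Longrightarrow> x = hd xs" by blast+
  show "sorted_partition (x # xs)"
    unfolding sorted_partition_def
  proof (intro allI impI)
    fix i j k assume ijk: "i < j \<and> j < k \<and> k < length (x # xs) \<and> (x # xs) ! i = (x # xs) ! k"
    obtain j' where j': "j = Suc j'" using ijk by (cases j) auto
    obtain k' where k': "k = Suc k'" using ijk by (cases k) auto
    show "(x # xs) ! j = (x # xs) ! i"
    proof (cases i)
      case 0
      then have "x = xs ! k'" "k' < length xs" using ijk k' by auto
      then have "x \<in> set xs" by simp
      then have "xs ! 0 = x" using head by (cases xs) auto
      then have "xs ! j' = x"
        using sorted_partitionD[OF sorted, of 0 j' k'] ijk j' k' \<open>x = xs ! k'\<close>
        by (cases j') auto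
      then show ?thesis using 0 j' by simp
    next
      case (Suc i')
      have "xs ! j' = xs ! i'"
        by (rule sorted_partitionD[OF sorted]) (use ijk Suc j' k' in auto)
      then show ?thesis using Suc j' by simp
    qed
  qed
qed

lemma sorted_partition_iff_avoids_aba: "sorted_partition w \<longleftrightarrow> avoids_aba w"
  unfolding avoids_aba_def contains_aba_def sorted_partition_def by (metis (no_types))

lemma remdups_adj_Cons_if:
  "remdups_adj (x # xs) = (if xs \<noteq> [] \<and> hd xs = x then remdups_adj xs else x # remdups_adj xs)"
  by (cases xs) auto

lemma sorted_partition_iff_distinct_remdups_adj:
  "sorted_partition xs \<longleftrightarrow> distinct (remdups_adj xs)"
  by (induction xs) (auto simp: remdups_adj_Cons_if)

lemma sorted_partition_rev [simp]: "sorted_partition (rev xs) \<longleftrightarrow> sorted_partition xs"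
  by (simp add: sorted_partition_iff_distinct_remdups_adj)

lemma sorted_partition_appendD: "sorted_partition (xs @ ys) \<Longrightarrow> sorted_partition ys"
  by (induction xs) auto

lemma sorted_partition_append:
  "sorted_partition xs \<Longrightarrow> sorted_partition ys \<Longrightarrow> set xs \<inter> set ys = {} \<Longrightarrow>
    sorted_partition (xs @ ys)"
  by (induction xs) (auto simp: hd_append)

lemma distinct_imp_sorted_partition: "distinct xs \<Longrightarrow> sorted_partition xs"
  by (induction xs) auto

lemma sorted_partition_no_aba:
  "sorted_partition (xs @ y # ys) \<Longrightarrow> x \<in> set xs \<Longrightarrow> x \<in> set ys \<Longrightarrow> x = y"
proof (induction xs)
  case (Cons a xs)
  show ?case
  proof (cases "a = x")
    case True
    then have "hd (xs @ y # ys) = x" using Cons.prems by auto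
    then show ?thesis using Cons True by (cases xs) auto
  next
    case False
    then show ?thesis using Cons by auto
  qed
qed simp

definition runs :: "'a list \<Rightarrow> nat" where
  "runs xs = length (remdups_adj xs)"

lemma runs_Nil [simp]: "runs [] = 0"
  by (simp add: runs_def)

lemma runs_Cons: "runs (x # xs) = (if xs \<noteq> [] \<and> hd xs = x then 0 else 1) + runs xs"
  by (simp add: runs_def remdups_adj_Cons_if)

lemma runs_le_length: "runs xs \<le> length xs"
  by (simp add: runs_def)

lemma card_le_runs: "card (set xs) \<le> runs xs"
  unfolding runs_def by (metis card_length remdups_adj_set)

lemma sorted_partition_iff_runs_eq_card: "sorted_partition xs \<longleftrightarrow> runs xs = card (set xs)"
  unfolding sorted_partition_iff_distinct_remdups_adj runs_def
  by (metis card_distinct distinct_card remdups_adj_set)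

lemma runs_distinct: "distinct xs \<Longrightarrow> runs xs = length xs"
  by (simp add: runs_def remdups_adj_distinct)

lemma runs_append:
  "runs (xs @ ys) + (if xs \<noteq> [] \<and> ys \<noteq> [] \<and> last xs = hd ys then 1 else 0) = runs xs + runs ys"
  by (induction xs) (auto simp: runs_Cons hd_append)

lemma runs_append_le: "runs (xs @ ys) \<le> runs xs + runs ys"
  using runs_append[of xs ys] by linarith

lemma runs_less_length_if_adjacent: "runs (xs @ x # x # ys) < length (xs @ x # x # ys)"
  using runs_append_le[of xs "x # x # ys"] runs_le_length[of xs] runs_le_length[of "x # ys"]
  by (simp add: runs_Cons)

declare stack_run.simps [simp del]

lemma stack_run_Nil: "stack_run [] st = st"
  by (induction st) (subst stack_run.simps, simp)+

lemma stack_run_push: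
  "sorted_partition (c # st) \<Longrightarrow> stack_run (c # r) st = stack_run r (c # st)"
  by (subst stack_run.simps) (simp add: sorted_partition_iff_avoids_aba)

lemma stack_run_pop:
  "\<not> sorted_partition (c # t # s) \<Longrightarrow> stack_run (c # r) (t # s) = t # stack_run (c # r) s"
  by (subst stack_run.simps)
    (simp add: sorted_partition_iff_avoids_aba del: sorted_partition_Cons)

text \<open>\<open>merges inp st\<close> counts the pops, in the run of the machine on input \<open>inp\<close> and stack
  \<open>st\<close>, that bring a copy of the blocked input letter to the top of the stack; the letter
  is then pushed onto that copy, gluing two runs. A letter is never blocked by the empty
  stack, so the \<open>[]\<close> branch is unreachable.\<close>

function merges :: "'a list \<Rightarrow> 'a list \<Rightarrow> nat" where
  "merges [] st = 0"
| "merges (c # r) st =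
     (if sorted_partition (c # st) then merges r (c # st)
      else case st of
        [] \<Rightarrow> 0
      | t # s \<Rightarrow> (if s \<noteq> [] \<and> hd s = c then 1 else 0) + merges (c # r) s)"
  by pat_completeness auto
termination
  by (relation "measure (\<lambda>(inp, st). 2 * length inp + length st)") auto

declare merges.simps(2) [simp del]

lemma merges_push: "sorted_partition (c # st) \<Longrightarrow> merges (c # r) st = merges r (c # st)"
  by (simp add: merges.simps(2) del: sorted_partition_Cons)

lemma merges_pop:
  "\<not> sorted_partition (c # t # s) \<Longrightarrow>
    merges (c # r) (t # s) = (if s \<noteq> [] \<and> hd s = c then 1 else 0) + merges (c # r) s"
  by (simp add: merges.simps(2) del: sorted_partition_Cons)

lemma set_stack_run: "set (stack_run inp st) = set inp \<union> set st"
proof (induction inp st rule: merges.induct)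
  case (2 c r st)
  show ?case
  proof (cases "sorted_partition (c # st)")
    case True
    then show ?thesis using 2 by (simp add: stack_run_push)
  next
    case False
    then obtain t s where "st = t # s" by (cases st) auto
    then show ?thesis using 2 False by (auto simp: stack_run_pop)
  qed
qed (simp add: stack_run_Nil)

lemma hd_stack_run_pop:
  "\<not> sorted_partition (c # st) \<Longrightarrow> hd (stack_run (c # r) st) = hd st"
  by (cases st) (auto simp: stack_run_pop)

lemma runs_stack_run_le:
  "sorted_partition st \<Longrightarrow>
    runs (stack_run inp st) + (if inp \<noteq> [] \<and> st \<noteq> [] \<and> hd inp = hd st then 1 else 0)
      + merges inp st \<le> runs inp + runs st"
proof (induction inp st rule: merges.induct)
  case (1 st)
  then show ?case by (simp add: stack_run_Nil)
next
  case (2 c r st)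
  show ?case
  proof (cases "sorted_partition (c # st)")
    case True
    have IH: "runs (stack_run r (c # st)) + (if r \<noteq> [] \<and> hd r = c then 1 else 0)
        + merges r (c # st) \<le> runs r + runs (c # st)"
      using "2.IH"(1)[OF True True] by simp
    show ?thesis
      using IH runs_Cons[of c r] runs_Cons[of c st]
      unfolding stack_run_push[OF True] merges_push[OF True] by auto
  next
    case False
    then obtain t s where st: "st = t # s" and "c \<noteq> t" "c \<in> set s" "sorted_partition s"
      using "2.prems" by (cases st) auto
    define Y where "Y = stack_run (c # r) s"
    have IH: "runs Y + (if s \<noteq> [] \<and> hd s = c then 1 else 0) + merges (c # r) s
        \<le> runs (c # r) + runs s"
      using "2.IH"(2)[OF False st \<open>sorted_partition s\<close>] by (auto simp: Y_def)
    have "Y \<noteq> [] \<and> hd Y = t" if "s \<noteq> [] \<and> hd s = t"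
      using hd_stack_run_pop[of c s r] set_stack_run[of "c # r" s] that \<open>c \<noteq> t\<close> \<open>c \<in> set s\<close>
      by (auto simp: Y_def)
    then have "runs (t # Y) \<le> runs Y + (if s \<noteq> [] \<and> hd s = t then 0 else 1)"
      by (auto simp: runs_Cons)
    moreover have "runs (t # s) = runs s + (if s \<noteq> [] \<and> hd s = t then 0 else 1)"
      by (simp add: runs_Cons)
    moreover have "stack_run (c # r) st = t # Y"
      and "merges (c # r) st = (if s \<noteq> [] \<and> hd s = c then 1 else 0) + merges (c # r) s"
      using False st by (simp_all add: stack_run_pop merges_pop Y_def)
    ultimately show ?thesis
      using IH st \<open>c \<noteq> t\<close> by simp
  qed
qed

lemma merges_pos_if_buried:
  "sorted_partition st \<Longrightarrow> c \<in> set st \<Longrightarrow> c \<noteq> hd st \<Longrightarrow> 1 \<le> merges (c # r) st"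
proof (induction st)
  case (Cons t s)
  then have "\<not> sorted_partition (c # t # s)" "sorted_partition s" "c \<in> set s" by auto
  then show ?case
    using Cons.IH by (cases "s \<noteq> [] \<and> hd s = c") (auto simp: merges_pop)
qed simp

lemma sorted_partition_if_merges_zero:
  "sorted_partition st \<Longrightarrow> merges inp st = 0 \<Longrightarrow> sorted_partition (rev st @ inp)"
proof (induction inp arbitrary: st)
  case (Cons c r)
  show ?case
  proof (cases "sorted_partition (c # st)")
    case True
    then show ?thesis using Cons.IH[of "c # st"] Cons.prems(2) by (simp add: merges_push)
  next
    case False
    then have "1 \<le> merges (c # r) st" using Cons.prems(1) by (intro merges_pos_if_buried) auto
    then show ?thesis using Cons.prems(2) by simp
  qed
qed simp

lemma stack_run_push_all:
  "sorted_partition (rev xs @ st) \<Longrightarrow> stack_run (xs @ r) st = stack_run r (rev xs @ st)"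
proof (induction xs arbitrary: st)
  case (Cons x xs)
  then have "sorted_partition (x # st)" using sorted_partition_appendD[of "rev xs" "x # st"] by simp
  with Cons show ?case by (simp add: stack_run_push)
qed simp

lemma merges_push_all:
  "sorted_partition (rev xs @ st) \<Longrightarrow> merges (xs @ r) st = merges r (rev xs @ st)"
proof (induction xs arbitrary: st)
  case (Cons x xs)
  then have "sorted_partition (x # st)" using sorted_partition_appendD[of "rev xs" "x # st"] by simp
  with Cons show ?case by (simp add: merges_push)
qed simp

lemma stack_run_pop_until:
  "sorted_partition (U @ c # V) \<Longrightarrow> c \<notin> set U \<Longrightarrow>
    stack_run (c # r) (U @ c # V) = U @ stack_run r (c # c # V)"
proof (induction U)
  case Nil
  then show ?case by (simp add: stack_run_push)
next
  case (Cons u U)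
  then have "\<not> sorted_partition (c # u # U @ c # V)" "sorted_partition (U @ c # V)" by auto
  with Cons show ?case by (simp add: stack_run_pop del: sorted_partition_Cons)
qed

lemma merges_pop_until:
  "sorted_partition (U @ c # V) \<Longrightarrow> c \<notin> set U \<Longrightarrow>
    merges (c # r) (U @ c # V) = (if U = [] then 0 else 1) + merges r (c # c # V)"
proof (induction U)
  case Nil
  then show ?case by (simp add: merges_push)
next
  case (Cons u U)
  then have "\<not> sorted_partition (c # u # U @ c # V)" "sorted_partition (U @ c # V)" by auto
  moreover have "hd (U @ c # V) = c \<longleftrightarrow> U = []" using Cons.prems(2) by (cases U) auto
  ultimately show ?case using Cons by (simp add: merges_pop del: sorted_partition_Cons)
qed

lemma set_phi_aba [simp]: "set (phi_aba w) = set w"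
  by (simp add: phi_aba_def set_stack_run)

lemma set_funpow_phi_aba [simp]: "set ((phi_aba ^^ k) w) = set w"
  by (induction k) simp_all

lemma runs_phi_aba_le: "runs (phi_aba w) + merges w [] \<le> runs w"
  using runs_stack_run_le[of "[]" w] by (simp add: phi_aba_def)

lemma merges_pos_if_unsorted: "\<not> sorted_partition w \<Longrightarrow> 1 \<le> merges w []"
  using sorted_partition_if_merges_zero[of "[]" w] by fastforce

lemma sorted_partition_phi_aba: "sorted_partition w \<Longrightarrow> sorted_partition (phi_aba w)"
  using runs_phi_aba_le[of w] card_le_runs[of "phi_aba w"]
  by (simp add: sorted_partition_iff_runs_eq_card)

lemma sorted_partition_funpow_phi_aba: "sorted_partition w \<Longrightarrow> sorted_partition ((phi_aba ^^ k) w)"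
  by (induction k) (simp_all add: sorted_partition_phi_aba)

lemma runs_funpow_phi_aba_le:
  "\<not> sorted_partition ((phi_aba ^^ k) w) \<Longrightarrow> runs ((phi_aba ^^ k) w) + k \<le> runs w"
proof (induction k)
  case (Suc k)
  then have "\<not> sorted_partition ((phi_aba ^^ k) w)" using sorted_partition_phi_aba by auto
  then show ?case
    using Suc.IH merges_pos_if_unsorted runs_phi_aba_le[of "(phi_aba ^^ k) w"] by fastforce
qed simp

lemma runs_lower_bound_if_unsorted_iterate:
  assumes "\<not> sorted_partition ((phi_aba ^^ Suc k) w)"
  shows "card (set w) + Suc k + merges w [] \<le> runs w"
proof -
  have unsorted: "\<not> sorted_partition ((phi_aba ^^ k) (phi_aba w))"
    using assms by (simp add: funpow_Suc_right del: funpow.simps)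
  have "card (set w) < runs ((phi_aba ^^ k) (phi_aba w))"
    using unsorted card_le_runs[of "(phi_aba ^^ k) (phi_aba w)"]
    by (simp add: sorted_partition_iff_runs_eq_card)
  then show ?thesis
    using runs_funpow_phi_aba_le[OF unsorted] runs_phi_aba_le[of w] by linarith
qed

lemma phi_aba_single_merge:
  assumes sorted: "sorted_partition (A @ c # B)" and "c \<notin> set B" "B \<noteq> []"
    and merge: "merges (A @ c # B @ c # r) [] = 1"
  shows "sorted_partition (A @ c # c # r)"
    and "phi_aba (A @ c # B @ c # r) = rev B @ rev r @ c # c # rev A"
proof -
  have stack: "sorted_partition (rev B @ c # rev A)"
    using sorted_partition_rev[of "A @ c # B"] sorted by simp
  have "merges (A @ c # B @ c # r) [] = merges (c # r) (rev B @ c # rev A)"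
    using merges_push_all[of "A @ c # B" "[]" "c # r"] stack by simp
  also have "\<dots> = 1 + merges r (c # c # rev A)"
    using merges_pop_until[OF stack] assms(2,3) by simp
  finally have "merges r (c # c # rev A) = 0" using merge by simp
  moreover have "sorted_partition (c # rev A)"
    using stack sorted_partition_appendD[of "rev B"] by blast
  then have "sorted_partition (c # c # rev A)" by simp
  ultimately show sorted_result: "sorted_partition (A @ c # c # r)"
    using sorted_partition_if_merges_zero[of "c # c # rev A" r] by simp
  have "phi_aba (A @ c # B @ c # r) = stack_run (c # r) (rev B @ c # rev A)"
    unfolding phi_aba_def using stack_run_push_all[of "A @ c # B" "[]" "c # r"] stack by simp
  also have "\<dots> = rev B @ stack_run r (c # c # rev A)"
    using stack_run_pop_until[OF stack] assms(2) by simp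
  also have "stack_run r (c # c # rev A) = rev r @ c # c # rev A"
    using stack_run_push_all[of r "c # c # rev A" "[]"] sorted_result
      sorted_partition_rev[of "A @ c # c # r"] by (simp add: stack_run_Nil)
  finally show "phi_aba (A @ c # B @ c # r) = rev B @ rev r @ c # c # rev A" .
qed

text \<open>The invariant shape \<open>S\<^sub>1 \<tau> S\<^sub>2 \<rho> S\<^sub>3\<close> of the words \<open>\<phi>\<^sup>k(p)\<close>.\<close>

locale permutation_blocks =
  fixes S1 \<tau> S2 \<rho> S3 :: "'a list"
  assumes distinct_\<tau>: "distinct \<tau>" and distinct_\<rho>: "distinct \<rho>"
    and set_\<rho>: "set \<rho> = set \<tau>"
    and sorted_S: "sorted_partition S1" "sorted_partition S2" "sorted_partition S3"
    and disjoint_S: "set S1 \<inter> set S2 = {}" "set S1 \<inter> set S3 = {}" "set S2 \<inter> set S3 = {}"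
    and disjoint_\<tau>: "set \<tau> \<inter> (set S1 \<union> set S2 \<union> set S3) = {}"
begin

abbreviation word :: "'a list" where
  "word \<equiv> S1 @ \<tau> @ S2 @ \<rho> @ S3"

lemma length_\<rho>: "length \<rho> = length \<tau>"
  using distinct_\<tau> distinct_\<rho> set_\<rho> by (metis distinct_card)

lemma card_set_word:
  "card (set word) = card (set S1) + card (set S2) + card (set S3) + length \<tau>"
proof -
  have "set word = set S1 \<union> set S2 \<union> set S3 \<union> set \<tau>" using set_\<rho> by auto
  then show ?thesis
    using disjoint_S disjoint_\<tau> distinct_card[OF distinct_\<tau>]
    by (simp add: card_Un_disjoint Int_Un_distrib Int_Un_distrib2 Int_commute)
qed

lemma runs_word_le:
  "runs word + (if S2 = [] \<and> \<tau> \<noteq> [] \<and> last \<tau> = hd \<rho> then 1 else 0)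
    \<le> card (set S1) + card (set S2) + card (set S3) + 2 * length \<tau>"
proof -
  have middle: "runs (\<tau> @ S2 @ \<rho>) + (if S2 = [] \<and> \<tau> \<noteq> [] \<and> last \<tau> = hd \<rho> then 1 else 0)
      \<le> runs \<tau> + runs S2 + runs \<rho>"
  proof (cases "S2 = []")
    case True
    have "\<tau> \<noteq> [] \<Longrightarrow> \<rho> \<noteq> []" using length_\<rho> by auto
    then show ?thesis using True runs_append[of \<tau> \<rho>] by auto
  next
    case False
    then show ?thesis using runs_append_le[of \<tau> "S2 @ \<rho>"] runs_append_le[of S2 \<rho>] by simp
  qed
  have "runs word \<le> runs S1 + runs (\<tau> @ S2 @ \<rho>) + runs S3"
    using runs_append_le[of S1 "(\<tau> @ S2 @ \<rho>) @ S3"] runs_append_le[of "\<tau> @ S2 @ \<rho>" S3]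
    by simp
  moreover have "runs S1 = card (set S1)" "runs S2 = card (set S2)" "runs S3 = card (set S3)"
    using sorted_S by (simp_all add: sorted_partition_iff_runs_eq_card)
  moreover have "runs \<tau> = length \<tau>" "runs \<rho> = length \<tau>"
    using runs_distinct distinct_\<tau> distinct_\<rho> length_\<rho> by metis+
  ultimately show ?thesis using middle by linarith
qed

lemma single_merge_word:
  assumes "1 < length \<tau>" "\<not> sorted_partition ((phi_aba ^^ (length \<tau> - 1)) word)"
  shows "merges word [] = 1" and "S2 \<noteq> [] \<or> last \<tau> \<noteq> hd \<rho>"
proof -
  have "\<not> sorted_partition word"
    using assms(2) sorted_partition_funpow_phi_aba by blast
  then have "1 \<le> merges word []" by (rule merges_pos_if_unsorted)
  moreover have "card (set word) + (length \<tau> - 1) + merges word [] \<le> runs word"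
    using runs_lower_bound_if_unsorted_iterate[of "length \<tau> - 2" word] assms
    by (simp add: Suc_diff_Suc numeral_2_eq_2)
  ultimately show "merges word [] = 1" "S2 \<noteq> [] \<or> last \<tau> \<noteq> hd \<rho>"
    using runs_word_le card_set_word assms(1) by (auto split: if_splits)
qed

lemma phi_aba_word:
  assumes "1 < length \<tau>" "\<not> sorted_partition ((phi_aba ^^ (length \<tau> - 1)) word)"
  shows "hd \<rho> = hd \<tau>"
    and "phi_aba word = rev S2 @ rev (tl \<tau>) @ rev S3 @ rev (tl \<rho>) @ hd \<tau> # hd \<tau> # rev S1"
proof -
  obtain r \<rho>' where \<rho>: "\<rho> = r # \<rho>'" using assms(1) length_\<rho> by (cases \<rho>) auto
  then obtain A B where \<tau>: "\<tau> = A @ r # B" using set_\<rho> by (metis list.set_intros(1) split_list)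
  have "r \<notin> set A" "r \<notin> set B" using distinct_\<tau> \<tau> by auto
  have "sorted_partition (\<tau> @ S2)"
    using sorted_partition_append[OF distinct_imp_sorted_partition[OF distinct_\<tau>] sorted_S(2)]
      disjoint_\<tau> by blast
  then have "sorted_partition (S1 @ \<tau> @ S2)"
    by (rule sorted_partition_append[OF sorted_S(1)]) (use disjoint_S disjoint_\<tau> in auto)
  then have sorted: "sorted_partition (S1 @ A @ r # B @ S2)" by (simp add: \<tau>)
  have "B @ S2 \<noteq> []"
    using single_merge_word(2)[OF assms] \<rho> \<tau> by auto
  moreover have "r \<notin> set (B @ S2)" using \<open>r \<notin> set B\<close> disjoint_\<tau> \<tau> by auto
  moreover have "merges ((S1 @ A) @ r # (B @ S2) @ r # \<rho>' @ S3) [] = 1"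
    using single_merge_word(1)[OF assms] \<rho> \<tau> by simp
  ultimately have merged: "sorted_partition ((S1 @ A) @ r # r # \<rho>' @ S3)"
    and phi: "phi_aba ((S1 @ A) @ r # (B @ S2) @ r # \<rho>' @ S3)
      = rev (B @ S2) @ rev (\<rho>' @ S3) @ r # r # rev (S1 @ A)"
    using phi_aba_single_merge[of "S1 @ A" r "B @ S2"] sorted by auto
  have "A = []"
  proof (rule ccontr)
    assume "A \<noteq> []"
    then have "hd A \<in> set A" by simp
    then have "hd A \<noteq> r" "hd A \<in> set \<rho>'" using set_\<rho> \<rho> \<tau> \<open>r \<notin> set A\<close> by auto
    then show False
      using sorted_partition_no_aba[OF merged, of "hd A"] \<open>A \<noteq> []\<close> by simp
  qed
  then show "hd \<rho> = hd \<tau>"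
    and "phi_aba word = rev S2 @ rev (tl \<tau>) @ rev S3 @ rev (tl \<rho>) @ hd \<tau> # hd \<tau> # rev S1"
    using phi \<rho> \<tau> by simp_all
qed

lemma permutation_blocks_shift:
  assumes "hd \<rho> = hd \<tau>" "\<tau> \<noteq> []"
  shows "permutation_blocks (rev S2) (rev (tl \<tau>)) (rev S3) (rev (tl \<rho>))
    (hd \<tau> # hd \<tau> # rev S1)"
proof -
  obtain t \<tau>' \<rho>' where \<tau>: "\<tau> = t # \<tau>'" and \<rho>: "\<rho> = t # \<rho>'"
    using assms length_\<rho> by (cases \<tau>; cases \<rho>) auto
  have t: "t \<notin> set S1" "t \<notin> set S2" "t \<notin> set S3" "t \<notin> set \<tau>'" "t \<notin> set \<rho>'"
    using disjoint_\<tau> distinct_\<tau> distinct_\<rho> unfolding \<tau> \<rho> by auto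
  have "set \<rho>' = set \<tau>'" using set_\<rho> t(4,5) unfolding \<tau> \<rho> by auto
  with t show ?thesis
    using distinct_\<tau> distinct_\<rho> sorted_S disjoint_S disjoint_\<tau> unfolding \<tau> \<rho>
    by unfold_locales (simp_all, blast+)
qed

end

lemma permutation_blocks_rigid:
  assumes "permutation_blocks S1 \<tau> S2 \<rho> S3" "\<tau> \<noteq> []"
    and "\<not> sorted_partition ((phi_aba ^^ (length \<tau> - 1)) (S1 @ \<tau> @ S2 @ \<rho> @ S3))"
  shows "\<rho> = \<tau>"
  using assms
proof (induction "length \<tau>" arbitrary: S1 \<tau> S2 \<rho> S3 rule: less_induct)
  case less
  interpret permutation_blocks S1 \<tau> S2 \<rho> S3 by fact
  show ?case
  proof (cases "length \<tau> = 1")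
    case True
    then show ?thesis using length_\<rho> set_\<rho> by (cases \<tau>; cases \<rho>) auto
  next
    case False
    then have long: "1 < length \<tau>" using less.prems(2) by (cases \<tau>) auto
    note hd_eq = phi_aba_word(1)[OF long less.prems(3)]
    have "length \<tau> - 1 = Suc (length (rev (tl \<tau>)) - 1)" using long by simp
    then have "(phi_aba ^^ (length \<tau> - 1)) word
        = (phi_aba ^^ (length (rev (tl \<tau>)) - 1)) (phi_aba word)"
      by (simp only: funpow_Suc_right o_apply)
    then have "\<not> sorted_partition ((phi_aba ^^ (length (rev (tl \<tau>)) - 1))
        (rev S2 @ rev (tl \<tau>) @ rev S3 @ rev (tl \<rho>) @ hd \<tau> # hd \<tau> # rev S1))"
      using phi_aba_word(2)[OF long less.prems(3)] less.prems(3) by simp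
    moreover have "length (rev (tl \<tau>)) < length \<tau>" "rev (tl \<tau>) \<noteq> []"
      using long by (cases \<tau>; simp)+
    ultimately have "rev (tl \<rho>) = rev (tl \<tau>)"
      using less.hyps[OF _ permutation_blocks_shift[OF hd_eq less.prems(2)]] by simp
    then show ?thesis using hd_eq less.prems(2) length_\<rho> by (cases \<tau>; cases \<rho>) auto
  qed
qed

lemma first_repeat:
  "\<not> distinct xs \<Longrightarrow> \<exists>\<tau> c r. xs = \<tau> @ c # r \<and> distinct \<tau> \<and> c \<in> set \<tau>"
proof (induction xs rule: rev_induct)
  case (snoc y ys)
  show ?case
  proof (cases "distinct ys")
    case True
    then show ?thesis using snoc.prems by (intro exI[of _ ys] exI[of _ y] exI[of _ "[]"]) simp
  next
    case False
    then obtain \<tau> c r where "ys = \<tau> @ c # r" "distinct \<tau>" "c \<in> set \<tau>" using snoc.IH by blast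
    then show ?thesis by (intro exI[of _ \<tau>] exI[of _ c] exI[of _ "r @ [y]"]) simp
  qed
qed simp

lemma split_into_permutations:
  assumes runs: "runs p = length p" and len: "length p = 2 * card (set p)"
    and merge: "merges p [] = 1"
  obtains \<tau> \<rho> where "p = \<tau> @ \<rho>" "\<tau> \<noteq> []" "length \<tau> = card (set p)"
    and "permutation_blocks [] \<tau> [] \<rho> []"
proof -
  have "p \<noteq> []" using merge by auto
  then have "\<not> distinct p" using len distinct_card[of p] by fastforce
  then obtain \<tau> c r where p: "p = \<tau> @ c # r" and "distinct \<tau>" "c \<in> set \<tau>"
    using first_repeat by blast
  then obtain A B where \<tau>: "\<tau> = A @ c # B" and "c \<notin> set B"
    using split_list_last by metis
  have "B \<noteq> []"
    using runs_less_length_if_adjacent[of A c r] runs p \<tau> by auto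
  then have "sorted_partition (A @ c # c # r)"
    using phi_aba_single_merge(1)[of A c B r] merge \<open>distinct \<tau>\<close> \<open>c \<notin> set B\<close> p \<tau>
    by (simp add: distinct_imp_sorted_partition)
  then have "sorted_partition (c # r)"
    using sorted_partition_appendD[of "A @ [c]" "c # r"] by simp
  moreover have "length (c # r) \<le> runs (c # r)"
    using runs p runs_append_le[of \<tau> "c # r"] runs_le_length[of \<tau>] by simp
  ultimately have "distinct (c # r)"
    using runs_le_length[of "c # r"] card_distinct
    by (metis le_antisym sorted_partition_iff_runs_eq_card)
  have "length \<tau> \<le> card (set p)" "length (c # r) \<le> card (set p)"
    using card_mono[of "set p" "set \<tau>"] card_mono[of "set p" "set (c # r)"]
      distinct_card[OF \<open>distinct \<tau>\<close>] distinct_card[OF \<open>distinct (c # r)\<close>] p by auto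
  then have "length \<tau> = card (set p)" "length (c # r) = card (set p)" using len p by simp_all
  then have "set \<tau> = set p" "set (c # r) = set p"
    using card_subset_eq[of "set p"] distinct_card \<open>distinct \<tau>\<close> \<open>distinct (c # r)\<close> p
    by (metis List.finite_set Un_upper1 Un_upper2 set_append)+
  then show ?thesis
    using that[OF p] \<open>length \<tau> = card (set p)\<close> \<open>distinct \<tau>\<close> \<open>distinct (c # r)\<close> \<tau>
    by (simp add: permutation_blocks_def)
qed

theorem theorem1:
  fixes p :: "'a list"
  assumes "num_letters p \<ge> 3"
    and "length p \<le> 2 * num_letters p"
    and "\<not> sorted_partition ((phi_aba ^^ (num_letters p - 1)) p)"
  shows "\<exists>as :: 'a list. distinct as \<and> length as = num_letters p \<and> equivalent p (as @ as)"
proof -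
  define N where "N = num_letters p"
  \<comment> \<open>only \<open>N \<ge> 2\<close> is needed\<close>
  have unsorted: "\<not> sorted_partition ((phi_aba ^^ Suc (N - 2)) p)"
    using assms(1,3) by (simp add: N_def Suc_diff_Suc numeral_2_eq_2)
  then have "1 \<le> merges p []"
    using merges_pos_if_unsorted sorted_partition_funpow_phi_aba by blast
  moreover have "N + Suc (N - 2) + merges p [] \<le> runs p"
    using runs_lower_bound_if_unsorted_iterate[OF unsorted] by (simp add: N_def num_letters_def)
  ultimately have "runs p = length p" "length p = 2 * card (set p)" "merges p [] = 1"
    using runs_le_length[of p] assms(1,2) unfolding N_def num_letters_def by linarith+
  then obtain \<tau> \<rho> where p: "p = \<tau> @ \<rho>" "\<tau> \<noteq> []" "length \<tau> = N"
    and blocks: "permutation_blocks [] \<tau> [] \<rho> []"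
    using split_into_permutations unfolding N_def num_letters_def by metis
  have "\<rho> = \<tau>"
    using permutation_blocks_rigid[OF blocks \<open>\<tau> \<noteq> []\<close>] assms(3) p by (simp add: N_def)
  then show ?thesis
    using p blocks unfolding equivalent_def N_def
    by (intro exI[of _ \<tau>]) (auto simp: permutation_blocks_def intro: exI[of _ id])
qed

end
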